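(* Let $i,\ell\in\{0,\dots,r-2\}$, $k\in\mathbb Z$, and $P=\mathbb C^H_{kr}\otimes P_\ell$. Then any nonzero morphism $P_i\to P$ in $\mathcal C$ is equal to one of $$\lambda I_i+\mu x_i,\qquad \lambda\alpha_i^+,\qquad \lambda\alpha_i^-,$$ for some $\lambda,\mu\in\mathbb C$. Here the morphisms are uniquely determined by: - $I_i:P_i\to P_i$, $h_i\mapsto h_i$; - $x_i:P_i\to P_i$, $h_i\mapsto s_i$; - $\alpha_i^+:P_i\to\mathbb C^H_r\otimes P_{r-2-i}$, $h_i\mapsto 1\otimes L_{i-r}$; - $\alpha_i^-:P_i\to\mathbb C^H_{-r}\otimes P_{r-2-i}$, $h_i\mapsto [i]!^{-2}\,1\otimes R_{i+r}$.
   Context: Fix a positive integer $r$. Set $q=e^{\pi\sqrt{-1}/r}$, $q^x=e^{\pi\sqrt{-1}x/r}$, $\{x\}=q^x-q^{-x}$, $[x]=\{x\}/\{1\}$, $[n]!=[n][n-1]\cdots[1]$. $\overline U=\overline U_q^H\mathfrak{sl}(2)$ is the Hopf algebra over $\mathbb C$ generated by $E,F,K,K^{-1},H$ with: - relations $KK^{-1}=K^{-1}K=1$, $KEK^{-1}=q^2E$, $KFK^{-1}=q^{-2}F$, $EF-FE=\frac{K-K^{-1}}{q-q^{-1}}$, $HK=KH$, $[H,E]=2E$, $[H,F]=-2F$, $E^r=F^r=0$; - coproduct $\Delta(E)=1\otimes E+E\otimes K$, $\Delta(F)=K^{-1}\otimes F+F\otimes1$, $\Delta(K)=K\otimes K$,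 $\Delta(H)=H\otimes1+1\otimes H$. $\mathcal C$ is the category of finite-dimensional weight modules ($H$ diagonalizable, $K=q^\lambda$ on weight-$\lambda$ vectors). $\mathbb C^H_{kr}$ is the one-dimensional module with $E=F=0$ and $H=kr$. Definition of $P_i$, for $i\in\{0,\dots,r-2\}$ (write $j=r-2-i$ and $\gamma_{n,k}=[k][n-k+1]$). $P_i$ has basis $h_m$ ($m=i,i-2,\dots,-i$), $s_m$ ($m=i,\dots,-i$), $R_m$ ($m=r+j,\dots,r-j$), $L_m$ ($m=j-r,\dots,-j-r$), each of weight $m$, with: - $Fh_m=h_{m-2}$ ($m>-i$), $Fh_{-i}=L_{j-r}$; - $Fs_m=s_{m-2}$ ($m>-i$), $Fs_{-i}=0$; - $FL_m=L_{m-2}$ ($m>-j-r$), $FL_{-j-r}=0$; - $FR_{r-j}=s_i$, $FR_{r-j+2k}=-\gamma_{j,k}R_{r-j+2k-2}$ ($1\le k\le j$); - $Eh_i=R_{r-j}$, $Eh_{i-2k}=\gamma_{i,k}h_{i-2k+2}+s_{i-2k+2}$ ($1\le k\le i$); - $Es_i=0$, $Es_{i-2k}=\gamma_{i,k}s_{i-2k+2}$; - $ER_m=R_{m+2}$ ($m<r+j$), $ER_{r+j}=0$; - $EL_{j-r}=s_{-i}$, $EL_{j-2k-r}=-\gamma_{j,k}L_{j-2k-r+2}$ ($1\le k\le j$). In $P_{r-2-i}$, the vectors $L_{i-r}$ and $R_{i+r}$ are the basis vectors of those weights. *)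

theory Defs
  imports Complex_Main
begin

definition qn :: "nat \<Rightarrow> int \<Rightarrow> complex" where
  "qn r x = exp (complex_of_real pi * \<i> * of_int x / of_nat r)"

definition qbrace :: "nat \<Rightarrow> int \<Rightarrow> complex" where
  "qbrace r x = qn r x - qn r (- x)"

definition qint :: "nat \<Rightarrow> int \<Rightarrow> complex" where
  "qint r x = qbrace r x / qbrace r 1"

definition qfact :: "nat \<Rightarrow> int \<Rightarrow> complex" where
  "qfact r n = (\<Prod>m\<in>{1..n}. qint r m)"

definition gam :: "nat \<Rightarrow> int \<Rightarrow> int \<Rightarrow> complex" where
  "gam r n k = qint r k * qint r (n - k + 1)"

datatype pb = Hv int | Sv int | Rv int | Lv int

type_synonym vec = "pb \<Rightarrow> complex"

definition bv :: "pb \<Rightarrow> vec" where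
  "bv b = (\<lambda>c. if c = b then 1 else 0)"

definition smul :: "complex \<Rightarrow> vec \<Rightarrow> vec" where
  "smul a v = (\<lambda>c. a * v c)"

fun wt :: "pb \<Rightarrow> int" where
  "wt (Hv m) = m" | "wt (Sv m) = m" | "wt (Rv m) = m" | "wt (Lv m) = m"

record umod =
  carrier :: "vec set"
  opE :: "vec \<Rightarrow> vec"
  opF :: "vec \<Rightarrow> vec"
  opK :: "vec \<Rightarrow> vec"
  opH :: "vec \<Rightarrow> vec"

definition inBasis :: "nat \<Rightarrow> int \<Rightarrow> pb \<Rightarrow> bool" where
  "inBasis r i b = (let j = int r - 2 - i in case b of
      Hv m \<Rightarrow> - i \<le> m \<and> m \<le> i \<and> even (i - m)
    | Sv m \<Rightarrow> - i \<le> m \<and> m \<le> i \<and> even (i - m)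
    | Rv m \<Rightarrow> int r - j \<le> m \<and> m \<le> int r + j \<and> even (int r + j - m)
    | Lv m \<Rightarrow> - j - int r \<le> m \<and> m \<le> j - int r \<and> even (j - int r - m))"

definition Fb :: "nat \<Rightarrow> int \<Rightarrow> pb \<Rightarrow> vec" where
  "Fb r i b = (let j = int r - 2 - i in case b of
      Hv m \<Rightarrow> if m > - i then bv (Hv (m - 2)) else bv (Lv (j - int r))
    | Sv m \<Rightarrow> if m > - i then bv (Sv (m - 2)) else (\<lambda>_. 0)
    | Lv m \<Rightarrow> if m > - j - int r then bv (Lv (m - 2)) else (\<lambda>_. 0)
    | Rv m \<Rightarrow> if m = int r - j then bv (Sv i)
              else smul (- gam r j ((m - (int r - j)) div 2)) (bv (Rv (m - 2))))"

definition Eb :: "nat \<Rightarrow> int \<Rightarrow> pb \<Rightarrow> vec" where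
  "Eb r i b = (let j = int r - 2 - i in case b of
      Hv m \<Rightarrow> if m = i then bv (Rv (int r - j))
              else (\<lambda>c. gam r i ((i - m) div 2) * bv (Hv (m + 2)) c + bv (Sv (m + 2)) c)
    | Sv m \<Rightarrow> if m = i then (\<lambda>_. 0)
              else smul (gam r i ((i - m) div 2)) (bv (Sv (m + 2)))
    | Rv m \<Rightarrow> if m < int r + j then bv (Rv (m + 2)) else (\<lambda>_. 0)
    | Lv m \<Rightarrow> if m = j - int r then bv (Sv (- i))
              else smul (- gam r j ((j - int r - m) div 2)) (bv (Lv (m + 2))))"

definition extend :: "nat \<Rightarrow> int \<Rightarrow> (pb \<Rightarrow> vec) \<Rightarrow> vec \<Rightarrow> vec" where
  "extend r i g v = (\<lambda>c. \<Sum>b\<in>{b. inBasis r i b}. v b * g b c)"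

definition Pmod :: "nat \<Rightarrow> int \<Rightarrow> umod" where
  "Pmod r i = \<lparr> carrier = {v. \<forall>b. \<not> inBasis r i b \<longrightarrow> v b = 0},
               opE = extend r i (Eb r i),
               opF = extend r i (Fb r i),
               opK = (\<lambda>v c. qn r (wt c) * v c),
               opH = (\<lambda>v c. of_int (wt c) * v c) \<rparr>"

section \<open>Tensor product C^H_{kr} \<otimes> M, identifying 1 \<otimes> v with v\<close>

text \<open>On C^H_{kr}: E = F = 0, H = kr, K = q^{kr}, K^{-1} = q^{-kr}.
  Delta(E) = 1 \<otimes> E + E \<otimes> K gives E(1 \<otimes> v) = 1 \<otimes> Ev;
  Delta(F) = K^{-1} \<otimes> F + F \<otimes> 1 gives F(1 \<otimes> v) = q^{-kr} (1 \<otimes> Fv);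
  Delta(K) = K \<otimes> K, Delta(H) = H \<otimes> 1 + 1 \<otimes> H.\<close>
definition tensC :: "nat \<Rightarrow> int \<Rightarrow> umod \<Rightarrow> umod" where
  "tensC r k M = \<lparr> carrier = carrier M,
               opE = opE M,
               opF = (\<lambda>v. smul (qn r (- (k * int r))) (opF M v)),
               opK = (\<lambda>v. smul (qn r (k * int r)) (opK M v)),
               opH = (\<lambda>v c. of_int (k * int r) * v c + opH M v c) \<rparr>"

section \<open>Morphisms in C (extensional: zero outside the carrier)\<close>

definition hom :: "umod \<Rightarrow> umod \<Rightarrow> (vec \<Rightarrow> vec) \<Rightarrow> bool" where
  "hom M N f \<longleftrightarrow>
     (\<forall>v\<in>carrier M. f v \<in> carrier N) \<and>
     (\<forall>v. v \<notin> carrier M \<longrightarrow> f v = (\<lambda>_. 0)) \<and>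
     (\<forall>v\<in>carrier M. \<forall>w\<in>carrier M. \<forall>a b.
        f (\<lambda>c. a * v c + b * w c) = (\<lambda>c. a * f v c + b * f w c)) \<and>
     (\<forall>v\<in>carrier M. f (opE M v) = opE N (f v)) \<and>
     (\<forall>v\<in>carrier M. f (opF M v) = opF N (f v)) \<and>
     (\<forall>v\<in>carrier M. f (opK M v) = opK N (f v)) \<and>
     (\<forall>v\<in>carrier M. f (opH M v) = opH N (f v))"

definition Imor :: "nat \<Rightarrow> int \<Rightarrow> vec \<Rightarrow> vec" where
  "Imor r i = (THE f. hom (Pmod r i) (Pmod r i) f \<and> f (bv (Hv i)) = bv (Hv i))"

definition xmor :: "nat \<Rightarrow> int \<Rightarrow> vec \<Rightarrow> vec" where
  "xmor r i = (THE f. hom (Pmod r i) (Pmod r i) f \<and> f (bv (Hv i)) = bv (Sv i))"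

definition alpha_plus :: "nat \<Rightarrow> int \<Rightarrow> vec \<Rightarrow> vec" where
  "alpha_plus r i = (THE f. hom (Pmod r i) (tensC r 1 (Pmod r (int r - 2 - i))) f \<and>
                            f (bv (Hv i)) = bv (Lv (i - int r)))"

definition alpha_minus :: "nat \<Rightarrow> int \<Rightarrow> vec \<Rightarrow> vec" where
  "alpha_minus r i = (THE f. hom (Pmod r i) (tensC r (-1) (Pmod r (int r - 2 - i))) f \<and>
                            f (bv (Hv i)) = smul (inverse (qfact r i ^ 2)) (bv (Rv (i + int r))))"

end

(*
  A morphism out of P_i is determined by the image w of the top vector h_i, because h_i
  generates P_i.  In C^H_{kr} \<otimes> P_l the vector w must have weight i - kr, and since
  E F E h_i = E s_i = 0 it is also killed by E F E.  On P_l the operator E F E is injective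
  on every weight space except the top h/s weight space (weight l) and the extreme vectors
  R_{2r-2-l} and L_{-l-2}; comparing weights forces k \<in> {0, 1, -1} and l \<in> {i, r-2-i}.
  Rescaling then identifies f with the named morphisms, whose existence is witnessed by f itself.
*)

theory Submission
  imports Defs
begin

lemma qn_eq_cis: "qn r x = cis (pi * of_int x / of_nat r)"
  unfolding qn_def cis_conv_exp by (simp add: mult_ac)

lemma qn_nonzero: "qn r x \<noteq> 0"
  by (simp add: qn_def)

lemma qbrace_nonzero:
  assumes "0 < x" "x < int r"
  shows "qbrace r x \<noteq> 0"
proof
  assume "qbrace r x = 0"
  moreover have "Im (qbrace r x) = 2 * sin (pi * of_int x / of_nat r)"
    unfolding qbrace_def qn_eq_cis by simp
  moreover have "sin (pi * of_int x / of_nat r) > 0"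
  proof (rule sin_gt_zero)
    have "real_of_int x / real r < 1" using assms by simp
    then show "pi * of_int x / of_nat r < pi"
      using mult_strict_left_mono[of "real_of_int x / real r" 1 pi] by simp
  qed (use assms in simp)
  ultimately show False by simp
qed

lemma qint_nonzero: "0 < x \<Longrightarrow> x < int r \<Longrightarrow> qint r x \<noteq> 0"
  unfolding qint_def using qbrace_nonzero[of x r] qbrace_nonzero[of 1 r] by simp

lemma gam_nonzero: "1 \<le> k \<Longrightarrow> k \<le> n \<Longrightarrow> n \<le> int r - 2 \<Longrightarrow> gam r n k \<noteq> 0"
  unfolding gam_def by (simp add: qint_nonzero)

lemma qfact_nonzero: "n \<le> int r - 2 \<Longrightarrow> qfact r n \<noteq> 0"
  unfolding qfact_def by (simp add: qint_nonzero)

lemma finite_inBasis: "finite {b. inBasis r i b}"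
proof -
  define I where "I = {-(\<bar>i\<bar> + 2 * int r)..\<bar>i\<bar> + 2 * int r}"
  have "{b. inBasis r i b} \<subseteq> Hv ` I \<union> Sv ` I \<union> Rv ` I \<union> Lv ` I"
  proof
    fix b assume "b \<in> {b. inBasis r i b}"
    then show "b \<in> Hv ` I \<union> Sv ` I \<union> Rv ` I \<union> Lv ` I"
      by (cases b) (auto simp: inBasis_def Let_def I_def image_iff)
  qed
  then show ?thesis by (rule finite_subset) (simp add: I_def)
qed

lemma smul_smul: "smul a (smul b v) = smul (a * b) v"
  by (simp add: smul_def mult.assoc)

lemma smul_bv_eq_zero_iff: "smul a (bv b) = (\<lambda>_. 0) \<longleftrightarrow> a = 0"
  by (auto simp: smul_def bv_def fun_eq_iff)

lemma smul_eq_zero_iff: "smul a v = (\<lambda>_. 0) \<longleftrightarrow> a = 0 \<or> v = (\<lambda>_. 0)"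
  by (auto simp: smul_def fun_eq_iff)

lemma extend_bv: "inBasis r i b \<Longrightarrow> extend r i g (bv b) = g b"
proof (rule ext)
  fix c assume b: "inBasis r i b"
  have "extend r i g (bv b) c = (\<Sum>b'\<in>{b. inBasis r i b}. if b' = b then g b' c else 0)"
    unfolding extend_def bv_def by (rule sum.cong) auto
  also have "\<dots> = g b c" using finite_inBasis[of r i] b by (simp add: sum.delta')
  finally show "extend r i g (bv b) c = g b c" .
qed

lemma extend_lincomb:
  "extend r i g (\<lambda>c. a * u c + b * v c) = (\<lambda>c. a * extend r i g u c + b * extend r i g v c)"
  unfolding extend_def by (simp add: algebra_simps sum.distrib sum_distrib_left)

lemma extend_smul: "extend r i g (smul a u) = smul a (extend r i g u)"
  unfolding extend_def smul_def by (simp add: algebra_simps sum_distrib_left)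

definition linear_umod :: "umod \<Rightarrow> bool" where
  "linear_umod N \<longleftrightarrow> (\<lambda>_. 0) \<in> carrier N \<and>
     (\<forall>x\<in>carrier N. \<forall>y\<in>carrier N. \<forall>a b. (\<lambda>c. a * x c + b * y c) \<in> carrier N) \<and>
     (\<forall>x y a b. opE N (\<lambda>c. a * x c + b * y c) = (\<lambda>c. a * opE N x c + b * opE N y c)) \<and>
     (\<forall>x y a b. opF N (\<lambda>c. a * x c + b * y c) = (\<lambda>c. a * opF N x c + b * opF N y c)) \<and>
     (\<forall>x y a b. opK N (\<lambda>c. a * x c + b * y c) = (\<lambda>c. a * opK N x c + b * opK N y c)) \<and>
     (\<forall>x y a b. opH N (\<lambda>c. a * x c + b * y c) = (\<lambda>c. a * opH N x c + b * opH N y c))"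

lemma linear_umod_Pmod: "linear_umod (Pmod r i)"
  unfolding linear_umod_def Pmod_def by (simp add: extend_lincomb algebra_simps)

lemma linear_umod_tensC: "linear_umod M \<Longrightarrow> linear_umod (tensC r k M)"
  unfolding linear_umod_def tensC_def smul_def by (simp add: algebra_simps)

lemma linear_umod_lincomb_in_carrier:
  "linear_umod M \<Longrightarrow> x \<in> carrier M \<Longrightarrow> y \<in> carrier M \<Longrightarrow> (\<lambda>c. a * x c + b * y c) \<in> carrier M"
  unfolding linear_umod_def by blast

lemma linear_map_zero:
  fixes op :: "vec \<Rightarrow> vec"
  assumes "\<forall>x y a b. op (\<lambda>c. a * x c + b * y c) = (\<lambda>c. a * op x c + b * op y c)"
  shows "op (\<lambda>_. 0) = (\<lambda>_. 0)"
  using assms[rule_format, where x="\<lambda>_. 0" and y="\<lambda>_. 0" and a=0 and b=0] by simp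

lemma linear_umod_ops_zero:
  assumes "linear_umod N"
  shows "opE N (\<lambda>_. 0) = (\<lambda>_. 0)" "opF N (\<lambda>_. 0) = (\<lambda>_. 0)"
    "opK N (\<lambda>_. 0) = (\<lambda>_. 0)" "opH N (\<lambda>_. 0) = (\<lambda>_. 0)"
  using assms unfolding linear_umod_def by (auto intro: linear_map_zero)

lemma hom_lincomb:
  assumes "hom M N g1" "hom M N g2" "linear_umod N"
  shows "hom M N (\<lambda>v c. a * g1 v c + b * g2 v c)"
  using assms linear_umod_ops_zero[OF assms(3)]
  unfolding hom_def linear_umod_def by (auto simp: algebra_simps)

lemma hom_smul: "hom M N g \<Longrightarrow> linear_umod N \<Longrightarrow> hom M N (\<lambda>v. smul a (g v))"
  using hom_lincomb[of M N g g a 0] by (simp add: smul_def)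

lemma hom_zero: "linear_umod N \<Longrightarrow> hom M N (\<lambda>_ _. 0)"
  using linear_umod_ops_zero[of N] unfolding hom_def linear_umod_def by auto

lemma hom_apply_lincomb:
  "hom M N g \<Longrightarrow> v \<in> carrier M \<Longrightarrow> w \<in> carrier M \<Longrightarrow>
    g (\<lambda>c. a * v c + b * w c) = (\<lambda>c. a * g v c + b * g w c)"
  unfolding hom_def by blast

lemma hom_apply_smul: "hom M N g \<Longrightarrow> v \<in> carrier M \<Longrightarrow> g (smul a v) = smul a (g v)"
  using hom_apply_lincomb[of M N g v v a 0] by (simp add: smul_def)

lemma hom_apply_zero: "hom M N g \<Longrightarrow> (\<lambda>_. 0) \<in> carrier M \<Longrightarrow> g (\<lambda>_. 0) = (\<lambda>_. 0)"
  using hom_apply_lincomb[of M N g "\<lambda>_. 0" "\<lambda>_. 0" 0 0] by simp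

lemma hom_apply_sum:
  assumes g: "hom M N g" and M: "linear_umod M" and S: "finite S"
    and u: "\<And>x. x \<in> S \<Longrightarrow> u x \<in> carrier M"
  shows "(\<lambda>c. \<Sum>x\<in>S. a x * u x c) \<in> carrier M \<and>
    g (\<lambda>c. \<Sum>x\<in>S. a x * u x c) = (\<lambda>c. \<Sum>x\<in>S. a x * g (u x) c)"
  using S u
proof (induction S rule: finite_induct)
  case empty
  then show ?case using M hom_apply_zero[OF g] by (simp add: linear_umod_def)
next
  case (insert x S)
  let ?s = "\<lambda>c. \<Sum>x\<in>S. a x * u x c"
  have s: "?s \<in> carrier M" "g ?s = (\<lambda>c. \<Sum>x\<in>S. a x * g (u x) c)" and ux: "u x \<in> carrier M"
    using insert by auto
  have decomp: "(\<lambda>c. \<Sum>x\<in>insert x S. a x * u x c) = (\<lambda>c. a x * u x c + 1 * ?s c)"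
    using insert by simp
  have "(\<lambda>c. a x * u x c + 1 * ?s c) \<in> carrier M"
    by (rule linear_umod_lincomb_in_carrier[OF M ux s(1)])
  then show ?case
    unfolding decomp hom_apply_lincomb[OF g ux s(1)] s(2) using insert by simp
qed

lemma zero_in_carrier_Pmod: "(\<lambda>_. 0) \<in> carrier (Pmod r i)"
  by (simp add: Pmod_def)

lemma bv_in_carrier_Pmod: "inBasis r i b \<Longrightarrow> bv b \<in> carrier (Pmod r i)"
  unfolding Pmod_def bv_def by auto

lemma opE_Pmod_bv: "inBasis r i b \<Longrightarrow> opE (Pmod r i) (bv b) = Eb r i b"
  unfolding Pmod_def by (simp add: extend_bv)

lemma opF_Pmod_bv: "inBasis r i b \<Longrightarrow> opF (Pmod r i) (bv b) = Fb r i b"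
  unfolding Pmod_def by (simp add: extend_bv)

lemma Eb_outside_basis:
  "inBasis r i b \<Longrightarrow> 0 \<le> i \<Longrightarrow> i \<le> int r - 2 \<Longrightarrow> \<not> inBasis r i c \<Longrightarrow> Eb r i b c = 0"
  by (cases b; cases c) (auto simp: inBasis_def Eb_def Let_def bv_def smul_def, presburger+)

lemma Fb_outside_basis:
  "inBasis r i b \<Longrightarrow> 0 \<le> i \<Longrightarrow> i \<le> int r - 2 \<Longrightarrow> \<not> inBasis r i c \<Longrightarrow> Fb r i b c = 0"
  by (cases b; cases c) (auto simp: inBasis_def Fb_def Let_def bv_def smul_def, presburger+)

lemma carrier_Pmod_eq_sum:
  assumes "v \<in> carrier (Pmod r i)"
  shows "v = (\<lambda>c. \<Sum>b\<in>{b. inBasis r i b}. v b * bv b c)"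
proof (rule ext)
  fix c
  have "(\<Sum>b\<in>{b. inBasis r i b}. v b * bv b c) = (\<Sum>b\<in>{b. inBasis r i b}. if b = c then v c else 0)"
    by (rule sum.cong) (auto simp: bv_def)
  also have "\<dots> = v c" using finite_inBasis[of r i] assms by (simp add: sum.delta Pmod_def)
  finally show "v c = (\<Sum>b\<in>{b. inBasis r i b}. v b * bv b c)" by simp
qed

lemma hom_Pmod_expand:
  assumes "hom (Pmod r i) N g" "v \<in> carrier (Pmod r i)"
  shows "g v = (\<lambda>c. \<Sum>b\<in>{b. inBasis r i b}. v b * g (bv b) c)"
  using hom_apply_sum[OF assms(1) linear_umod_Pmod finite_inBasis, where u=bv and a=v]
    carrier_Pmod_eq_sum[OF assms(2)] bv_in_carrier_Pmod by force

lemma hom_agree_step: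
  assumes g: "hom (Pmod r i) N g" and g': "hom (Pmod r i) N g'" and b: "inBasis r i b"
    and agree: "g (bv b) = g' (bv b)" and step: "Eb r i b = bv b' \<or> Fb r i b = bv b'"
  shows "g (bv b') = g' (bv b')"
proof -
  have "g (opE (Pmod r i) (bv b)) = g' (opE (Pmod r i) (bv b))"
    "g (opF (Pmod r i) (bv b)) = g' (opF (Pmod r i) (bv b))"
    using g g' agree bv_in_carrier_Pmod[OF b] unfolding hom_def by auto
  then show ?thesis using step by (auto simp: opE_Pmod_bv[OF b] opF_Pmod_bv[OF b])
qed

lemma hom_agree_chain:
  assumes g: "hom (Pmod r i) N g" and g': "hom (Pmod r i) N g'"
    and start: "g (bv (b 0)) = g' (bv (b 0))"
    and steps: "\<And>n. n < m \<Longrightarrow> inBasis r i (b n) \<and>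
      (Eb r i (b n) = bv (b (Suc n)) \<or> Fb r i (b n) = bv (b (Suc n)))"
  shows "n \<le> m \<Longrightarrow> g (bv (b n)) = g' (bv (b n))"
proof (induction n)
  case (Suc n)
  then show ?case using hom_agree_step[OF g g'] steps[of n] by auto
qed (rule start)

lemma inBasis_cases:
  assumes "inBasis r i b" and j: "j = int r - 2 - i"
  obtains n where "n \<le> nat i" "b = Hv (i - 2 * int n)"
    | n where "n \<le> nat i" "b = Sv (i - 2 * int n)"
    | n where "n \<le> nat j" "b = Rv (int r - j + 2 * int n)"
    | n where "n \<le> nat j" "b = Lv (j - int r - 2 * int n)"
proof (cases b)
  case (Hv m)
  then show ?thesis using assms that(1)[of "nat ((i - m) div 2)"]
    by (auto simp: inBasis_def Let_def)
next
  case (Sv m)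
  then show ?thesis using assms that(2)[of "nat ((i - m) div 2)"]
    by (auto simp: inBasis_def Let_def)
next
  case (Rv m)
  with assms have "int r - j \<le> m" "m \<le> int r + j" "even (int r + j - m)"
    by (auto simp: inBasis_def Let_def)
  then have "0 \<le> (m - (int r - j)) div 2" "(m - (int r - j)) div 2 \<le> j"
    "m = int r - j + 2 * ((m - (int r - j)) div 2)" by presburger+
  then show ?thesis using Rv that(3)[of "nat ((m - (int r - j)) div 2)"] by simp
next
  case (Lv m)
  with assms have "- j - int r \<le> m" "m \<le> j - int r" "even (j - int r - m)"
    by (auto simp: inBasis_def Let_def)
  then have "0 \<le> (j - int r - m) div 2" "(j - int r - m) div 2 \<le> j"
    "m = j - int r - 2 * ((j - int r - m) div 2)" by presburger+
  then show ?thesis using Lv that(4)[of "nat ((j - int r - m) div 2)"] by simp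
qed

text \<open>h_i generates P_i: F runs down the h-string into the L-string, E sends h_i to the
  bottom of the R-string, E runs up the R-string, and F sends its bottom to s_i.\<close>

lemma hom_agree_basis:
  assumes g: "hom (Pmod r i) N g" and g': "hom (Pmod r i) N g'"
    and top: "g (bv (Hv i)) = g' (bv (Hv i))" and i: "0 \<le> i" "i \<le> int r - 2"
    and b: "inBasis r i b"
  shows "g (bv b) = g' (bv b)"
proof -
  define j where "j = int r - 2 - i"
  have j: "0 \<le> j" using i by (simp add: j_def)
  note chain = hom_agree_chain[OF g g']
  have H: "n \<le> nat i \<Longrightarrow> g (bv (Hv (i - 2 * int n))) = g' (bv (Hv (i - 2 * int n)))" for n
    by (rule chain[where b = "\<lambda>n. Hv (i - 2 * int n)"])
      (use top in \<open>auto simp: inBasis_def Fb_def Let_def algebra_simps\<close>)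
  have L0: "g (bv (Lv (j - int r))) = g' (bv (Lv (j - int r)))"
    by (rule hom_agree_step[OF g g', of "Hv (-i)"])
      (use H[of "nat i"] i in \<open>auto simp: inBasis_def Fb_def Let_def j_def\<close>)
  have L: "n \<le> nat j \<Longrightarrow> g (bv (Lv (j - int r - 2 * int n))) = g' (bv (Lv (j - int r - 2 * int n)))" for n
    by (rule chain[where b = "\<lambda>n. Lv (j - int r - 2 * int n)"])
      (use L0 in \<open>auto simp: inBasis_def Fb_def Let_def j_def algebra_simps\<close>)
  have R0: "g (bv (Rv (int r - j))) = g' (bv (Rv (int r - j)))"
    by (rule hom_agree_step[OF g g', of "Hv i"])
      (use top i j in \<open>auto simp: inBasis_def Eb_def Let_def j_def\<close>)
  have R: "n \<le> nat j \<Longrightarrow> g (bv (Rv (int r - j + 2 * int n))) = g' (bv (Rv (int r - j + 2 * int n)))" for n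
    by (rule chain[where b = "\<lambda>n. Rv (int r - j + 2 * int n)"])
      (use R0 in \<open>auto simp: inBasis_def Eb_def Let_def j_def algebra_simps\<close>)
  have S0: "g (bv (Sv i)) = g' (bv (Sv i))"
    by (rule hom_agree_step[OF g g', of "Rv (int r - j)"])
      (use R0 i j in \<open>auto simp: inBasis_def Fb_def Let_def j_def\<close>)
  have S: "n \<le> nat i \<Longrightarrow> g (bv (Sv (i - 2 * int n))) = g' (bv (Sv (i - 2 * int n)))" for n
    by (rule chain[where b = "\<lambda>n. Sv (i - 2 * int n)"])
      (use S0 in \<open>auto simp: inBasis_def Fb_def Let_def algebra_simps\<close>)
  from b j_def show ?thesis by (cases rule: inBasis_cases) (use H S R L in auto)
qed

lemma hom_Pmod_unique:
  assumes g: "hom (Pmod r i) N g" and g': "hom (Pmod r i) N g'"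
    and top: "g (bv (Hv i)) = g' (bv (Hv i))" and i: "0 \<le> i" "i \<le> int r - 2"
  shows "g = g'"
proof
  fix v
  show "g v = g' v"
  proof (cases "v \<in> carrier (Pmod r i)")
    case True
    then show ?thesis
      using hom_Pmod_expand[OF g True] hom_Pmod_expand[OF g' True] hom_agree_basis[OF g g' top i]
      by auto
  next
    case False
    then show ?thesis using g g' unfolding hom_def by auto
  qed
qed

text \<open>Imor, xmor, alpha_plus and alpha_minus are all of this form.\<close>

definition hom_of_top :: "nat \<Rightarrow> int \<Rightarrow> umod \<Rightarrow> vec \<Rightarrow> vec \<Rightarrow> vec" where
  "hom_of_top r i N w = (THE f. hom (Pmod r i) N f \<and> f (bv (Hv i)) = w)"

lemma hom_of_top_eq:
  assumes "hom (Pmod r i) N g" "g (bv (Hv i)) = w" "0 \<le> i" "i \<le> int r - 2"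
  shows "hom_of_top r i N w = g"
  unfolding hom_of_top_def
proof (rule the_equality)
  fix f assume "hom (Pmod r i) N f \<and> f (bv (Hv i)) = w"
  then show "f = g" using hom_Pmod_unique[OF _ assms(1) _ assms(3,4)] assms(2) by auto
qed (use assms in simp)

lemma hom_eq_smul_hom_of_top:
  assumes f: "hom (Pmod r i) N f" and N: "linear_umod N"
    and top: "f (bv (Hv i)) = smul c w" and c: "c \<noteq> 0" and i: "0 \<le> i" "i \<le> int r - 2"
  shows "f = (\<lambda>v. smul c (hom_of_top r i N w v))"
proof -
  define g where "g = (\<lambda>v. smul (inverse c) (f v))"
  have "hom (Pmod r i) N g" unfolding g_def using f N by (rule hom_smul)
  moreover have "g (bv (Hv i)) = w" using c by (simp add: g_def top smul_def fun_eq_iff)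
  ultimately have "hom_of_top r i N w = g" using i by (rule hom_of_top_eq)
  then show ?thesis using c by (simp add: g_def smul_def mult.assoc[symmetric])
qed

definition Pmod_id :: "nat \<Rightarrow> int \<Rightarrow> vec \<Rightarrow> vec" where
  "Pmod_id r i v = (if v \<in> carrier (Pmod r i) then v else (\<lambda>_. 0))"

lemma hom_Pmod_id:
  assumes "0 \<le> i" "i \<le> int r - 2"
  shows "hom (Pmod r i) (Pmod r i) (Pmod_id r i)"
proof -
  have "opE (Pmod r i) v \<in> carrier (Pmod r i)" "opF (Pmod r i) v \<in> carrier (Pmod r i)" for v
    using Eb_outside_basis[OF _ assms] Fb_outside_basis[OF _ assms]
    by (auto simp: Pmod_def extend_def)
  then show ?thesis unfolding hom_def Pmod_id_def by (auto simp: Pmod_def)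
qed

lemma Imor_eq_Pmod_id:
  assumes "0 \<le> i" "i \<le> int r - 2"
  shows "Imor r i = Pmod_id r i"
  unfolding Imor_def hom_of_top_def[symmetric]
  by (rule hom_of_top_eq[OF hom_Pmod_id[OF assms] _ assms])
    (use assms bv_in_carrier_Pmod[of r i "Hv i"] in \<open>simp add: Pmod_id_def inBasis_def\<close>)

lemma hom_Pmod_endo_eq:
  assumes f: "hom (Pmod r i) (Pmod r i) f" and i: "0 \<le> i" "i \<le> int r - 2"
    and top: "f (bv (Hv i)) = (\<lambda>c. a * bv (Hv i) c + b * bv (Sv i) c)"
  shows "f = (\<lambda>v c. a * Imor r i v c + b * xmor r i v c)"
proof -
  note id = hom_Pmod_id[OF i] and lin = linear_umod_Pmod[of r i]
  have id_top: "Pmod_id r i (bv (Hv i)) = bv (Hv i)"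
    using i bv_in_carrier_Pmod[of r i "Hv i"] by (simp add: Pmod_id_def inBasis_def)
  show ?thesis
  proof (cases "b = 0")
    case True
    \<comment> \<open>the xmor summand vanishes whatever THE picks, so xmor need not exist here\<close>
    have "f = (\<lambda>v c. a * Pmod_id r i v c + 0 * Pmod_id r i v c)"
      by (rule hom_Pmod_unique[OF f hom_lincomb[OF id id lin] _ i])
        (simp add: top True id_top)
    then show ?thesis by (simp add: True Imor_eq_Pmod_id[OF i])
  next
    case False
    define g where "g = (\<lambda>v c. 1 * f v c + (- a) * Pmod_id r i v c)"
    have g: "hom (Pmod r i) (Pmod r i) g" unfolding g_def by (rule hom_lincomb[OF f id lin])
    have g_top: "g (bv (Hv i)) = smul b (bv (Sv i))"
      by (simp add: g_def top id_top smul_def fun_eq_iff)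
    have "g = (\<lambda>v. smul b (xmor r i v))"
      unfolding xmor_def hom_of_top_def[symmetric] by (rule hom_eq_smul_hom_of_top[OF g lin g_top False i])
    then show ?thesis
      by (simp add: fun_eq_iff g_def smul_def Imor_eq_Pmod_id[OF i] algebra_simps)
  qed
qed

lemma opE_Pmod_HS:
  assumes "- l \<le> t" "t \<le> l - 2" "even (l - t)"
  shows "opE (Pmod r l) (\<lambda>c. x * bv (Hv t) c + y * bv (Sv t) c) =
    (\<lambda>c. x * gam r l ((l - t) div 2) * bv (Hv (t + 2)) c
       + (x + y * gam r l ((l - t) div 2)) * bv (Sv (t + 2)) c)"
proof -
  have "inBasis r l (Hv t)" "inBasis r l (Sv t)" using assms by (auto simp: inBasis_def)
  then have "opE (Pmod r l) (\<lambda>c. x * bv (Hv t) c + y * bv (Sv t) c) =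
      (\<lambda>c. x * Eb r l (Hv t) c + y * Eb r l (Sv t) c)"
    by (simp add: Pmod_def extend_lincomb extend_bv)
  then show ?thesis using assms by (auto simp: Eb_def bv_def smul_def algebra_simps fun_eq_iff)
qed

lemma opF_Pmod_HS:
  assumes "- l < t" "t \<le> l" "even (l - t)"
  shows "opF (Pmod r l) (\<lambda>c. x * bv (Hv t) c + y * bv (Sv t) c) =
    (\<lambda>c. x * bv (Hv (t - 2)) c + y * bv (Sv (t - 2)) c)"
proof -
  have "inBasis r l (Hv t)" "inBasis r l (Sv t)" using assms by (auto simp: inBasis_def)
  then have "opF (Pmod r l) (\<lambda>c. x * bv (Hv t) c + y * bv (Sv t) c) =
      (\<lambda>c. x * Fb r l (Hv t) c + y * Fb r l (Sv t) c)"
    by (simp add: Pmod_def extend_lincomb extend_bv)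
  then show ?thesis using assms by (auto simp: Fb_def bv_def fun_eq_iff)
qed

lemma EFE_Pmod_HS_eq_zero:
  assumes l: "l \<le> int r - 2" and t: "- l \<le> t" "t \<le> l - 2" "even (l - t)"
    and efe: "opE (Pmod r l) (opF (Pmod r l) (opE (Pmod r l)
      (\<lambda>c. x * bv (Hv t) c + y * bv (Sv t) c))) = (\<lambda>_. 0)"
  shows "x = 0 \<and> y = 0"
proof -
  define \<gamma> where "\<gamma> = gam r l ((l - t) div 2)"
  have "\<gamma> \<noteq> 0" unfolding \<gamma>_def using t l by (intro gam_nonzero) auto
  have "(\<lambda>c. x * \<gamma> * \<gamma> * bv (Hv (t + 2)) c + (x * \<gamma> + (x + y * \<gamma>) * \<gamma>) * bv (Sv (t + 2)) c)
    = opE (Pmod r l) (opF (Pmod r l) (opE (Pmod r l) (\<lambda>c. x * bv (Hv t) c + y * bv (Sv t) c)))"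
    using t by (simp add: opE_Pmod_HS opF_Pmod_HS \<gamma>_def)
  also have "\<dots> = (\<lambda>_. 0)" by (rule efe)
  finally have z: "(\<lambda>c. x * \<gamma> * \<gamma> * bv (Hv (t + 2)) c
      + (x * \<gamma> + (x + y * \<gamma>) * \<gamma>) * bv (Sv (t + 2)) c) = (\<lambda>_. 0)" .
  have "x * \<gamma> * \<gamma> = 0" "x * \<gamma> + (x + y * \<gamma>) * \<gamma> = 0"
    using fun_cong[OF z, of "Hv (t + 2)"] fun_cong[OF z, of "Sv (t + 2)"] by (simp_all add: bv_def)
  with \<open>\<gamma> \<noteq> 0\<close> show ?thesis by simp
qed

lemma EFE_Pmod_R_eq_zero:
  assumes l: "0 \<le> l" and t: "l + 2 \<le> t" "t \<le> 2 * int r - 4 - l" "even (l - t)"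
    and efe: "opE (Pmod r l) (opF (Pmod r l) (opE (Pmod r l) (smul a (bv (Rv t))))) = (\<lambda>_. 0)"
  shows "a = 0"
proof -
  define \<gamma> where "\<gamma> = gam r (int r - 2 - l) ((t - l) div 2)"
  have "\<gamma> \<noteq> 0" unfolding \<gamma>_def using t l by (intro gam_nonzero) auto
  have "inBasis r l (Rv t)" "inBasis r l (Rv (t + 2))" using t l by (auto simp: inBasis_def)
  then have "smul (- a * \<gamma>) (bv (Rv (t + 2)))
    = opE (Pmod r l) (opF (Pmod r l) (opE (Pmod r l) (smul a (bv (Rv t)))))"
    using t by (simp add: Pmod_def extend_smul extend_bv Eb_def Fb_def \<gamma>_def smul_smul)
  also have "\<dots> = (\<lambda>_. 0)" by (rule efe)
  finally have "- a * \<gamma> = 0" by (simp add: smul_bv_eq_zero_iff)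
  with \<open>\<gamma> \<noteq> 0\<close> show ?thesis by simp
qed

lemma EFE_Pmod_L_eq_zero:
  assumes l: "0 \<le> l" and t: "l + 2 - 2 * int r \<le> t" "t \<le> - l - 4" "even (l - t)"
    and efe: "opE (Pmod r l) (opF (Pmod r l) (opE (Pmod r l) (smul a (bv (Lv t))))) = (\<lambda>_. 0)"
  shows "a = 0"
proof -
  define \<gamma> where "\<gamma> = gam r (int r - 2 - l) ((- 2 - l - t) div 2)"
  have "\<gamma> \<noteq> 0" unfolding \<gamma>_def using t l by (intro gam_nonzero) auto
  have "inBasis r l (Lv t)" "inBasis r l (Lv (t + 2))" using t l by (auto simp: inBasis_def)
  then have "smul (a * \<gamma> * \<gamma>) (bv (Lv (t + 2)))
    = opE (Pmod r l) (opF (Pmod r l) (opE (Pmod r l) (smul a (bv (Lv t)))))"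
    using t by (simp add: Pmod_def extend_smul extend_bv Eb_def Fb_def \<gamma>_def smul_smul)
  also have "\<dots> = (\<lambda>_. 0)" by (rule efe)
  finally have "a * \<gamma> * \<gamma> = 0" by (simp add: smul_bv_eq_zero_iff)
  with \<open>\<gamma> \<noteq> 0\<close> show ?thesis by simp
qed

lemma EFE_kernel_weight_vector:
  assumes l: "0 \<le> l" "l \<le> int r - 2"
    and w: "w \<in> carrier (Pmod r l)" and weight: "\<forall>c. wt c \<noteq> t \<longrightarrow> w c = 0"
    and efe: "opE (Pmod r l) (opF (Pmod r l) (opE (Pmod r l) w)) = (\<lambda>_. 0)"
    and nonzero: "w \<noteq> (\<lambda>_. 0)"
  shows "(t = l \<and> (\<exists>x y. w = (\<lambda>c. x * bv (Hv t) c + y * bv (Sv t) c)))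
    \<or> (t = 2 * int r - 2 - l \<and> (\<exists>a. w = smul a (bv (Rv t))))
    \<or> (t = - l - 2 \<and> (\<exists>a. w = smul a (bv (Lv t))))"
proof -
  have out: "\<not> inBasis r l b \<Longrightarrow> w b = 0" for b using w by (simp add: Pmod_def)
  consider "- l \<le> t" "t \<le> l" "even (l - t)"
    | "l + 2 \<le> t" "t \<le> 2 * int r - 2 - l" "even (l - t)"
    | "l + 2 - 2 * int r \<le> t" "t \<le> - l - 2" "even (l - t)"
    | "\<not> inBasis r l (Hv t)" "\<not> inBasis r l (Rv t)" "\<not> inBasis r l (Lv t)"
  proof -
    have "even (int r + (int r - 2 - l) - t) \<longleftrightarrow> even (l - t)"
      "even ((int r - 2 - l) - int r - t) \<longleftrightarrow> even (l - t)" by presburger+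
    then show thesis using that unfolding inBasis_def Let_def pb.case by fastforce
  qed
  then show ?thesis
  proof cases
    case 1
    define x y where "x = w (Hv t)" and "y = w (Sv t)"
    from 1 l have "\<not> inBasis r l (Rv t)" "\<not> inBasis r l (Lv t)" by (auto simp: inBasis_def)
    then have zero: "w (Rv t) = 0" "w (Lv t) = 0" by (simp_all add: out)
    have HS: "w = (\<lambda>c. x * bv (Hv t) c + y * bv (Sv t) c)"
    proof
      fix c show "w c = x * bv (Hv t) c + y * bv (Sv t) c"
        using weight zero by (cases "wt c = t"; cases c) (auto simp: x_def y_def bv_def)
    qed
    have "t = l"
    proof (rule ccontr)
      assume "t \<noteq> l"
      with 1 have "t \<le> l - 2" by presburger
      with 1 have "x = 0 \<and> y = 0" by (intro EFE_Pmod_HS_eq_zero[OF l(2), of t] efe[unfolded HS]) auto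
      with HS nonzero show False by simp
    qed
    with HS show ?thesis by blast
  next
    case 2
    define a where "a = w (Rv t)"
    from 2 l have "\<not> inBasis r l (Hv t)" "\<not> inBasis r l (Sv t)" "\<not> inBasis r l (Lv t)" by (auto simp: inBasis_def)
    then have zero: "w (Hv t) = 0" "w (Sv t) = 0" "w (Lv t) = 0" by (simp_all add: out)
    have R: "w = smul a (bv (Rv t))"
    proof
      fix c show "w c = smul a (bv (Rv t)) c"
        using weight zero by (cases "wt c = t"; cases c) (auto simp: a_def smul_def bv_def)
    qed
    have "t = 2 * int r - 2 - l"
    proof (rule ccontr)
      assume "t \<noteq> 2 * int r - 2 - l"
      with 2 have t: "t \<le> 2 * int r - 4 - l" by presburger
      have "opE (Pmod r l) (opF (Pmod r l) (opE (Pmod r l) (smul a (bv (Rv t))))) = (\<lambda>_. 0)"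
        using efe[unfolded R] .
      then have "a = 0" by (rule EFE_Pmod_R_eq_zero[OF l(1) 2(1) t 2(3)])
      with R nonzero show False by (metis smul_bv_eq_zero_iff)
    qed
    with R show ?thesis by blast
  next
    case 3
    define a where "a = w (Lv t)"
    from 3 l have "\<not> inBasis r l (Hv t)" "\<not> inBasis r l (Sv t)" "\<not> inBasis r l (Rv t)" by (auto simp: inBasis_def)
    then have zero: "w (Hv t) = 0" "w (Sv t) = 0" "w (Rv t) = 0" by (simp_all add: out)
    have L: "w = smul a (bv (Lv t))"
    proof
      fix c show "w c = smul a (bv (Lv t)) c"
        using weight zero by (cases "wt c = t"; cases c) (auto simp: a_def smul_def bv_def)
    qed
    have "t = - l - 2"
    proof (rule ccontr)
      assume "t \<noteq> - l - 2"
      with 3 have t: "t \<le> - l - 4" by presburger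
      have "opE (Pmod r l) (opF (Pmod r l) (opE (Pmod r l) (smul a (bv (Lv t))))) = (\<lambda>_. 0)"
        using efe[unfolded L] .
      then have "a = 0" by (rule EFE_Pmod_L_eq_zero[OF l(1) 3(1) t 3(3)])
      with L nonzero show False by (metis smul_bv_eq_zero_iff)
    qed
    with L show ?thesis by blast
  next
    case 4
    then have "\<not> inBasis r l (Sv t)" by (simp add: inBasis_def)
    have "w = (\<lambda>_. 0)"
    proof
      fix c show "w c = 0" using 4 \<open>\<not> inBasis r l (Sv t)\<close> weight out by (cases "wt c = t"; cases c) auto
    qed
    with nonzero show ?thesis by simp
  qed
qed

lemma opE_Pmod_smul: "opE (Pmod r l) (smul a v) = smul a (opE (Pmod r l) v)"
  by (simp add: Pmod_def extend_smul)

lemma opH_Pmod_bv: "opH (Pmod r i) (bv b) = smul (of_int (wt b)) (bv b)"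
  by (auto simp: Pmod_def bv_def smul_def fun_eq_iff)

lemma tensC_zero: "tensC r 0 M = M"
  by (cases M) (simp add: tensC_def qn_def smul_def)

lemma tensC_simps:
  "carrier (tensC r k M) = carrier M"
  "opE (tensC r k M) = opE M"
  "opF (tensC r k M) v = smul (qn r (- (k * int r))) (opF M v)"
  "opH (tensC r k M) v = (\<lambda>c. of_int (k * int r) * v c + opH M v c)"
  by (simp_all add: tensC_def)

lemma hom_tensC_image_weight:
  assumes f: "hom (Pmod r i) (tensC r k (Pmod r l)) f" and b: "inBasis r i b"
    and c: "wt c \<noteq> wt b - k * int r"
  shows "f (bv b) c = 0"
proof -
  have bc: "bv b \<in> carrier (Pmod r i)" using b by (rule bv_in_carrier_Pmod)
  have "smul (of_int (wt b)) (f (bv b)) = f (opH (Pmod r i) (bv b))"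
    by (simp add: opH_Pmod_bv hom_apply_smul[OF f bc])
  also have "\<dots> = opH (tensC r k (Pmod r l)) (f (bv b))"
    using f bc unfolding hom_def by blast
  finally have "of_int (wt b) * f (bv b) c = (of_int (k * int r) + of_int (wt c)) * f (bv b) c"
    by (auto simp: tensC_simps Pmod_def smul_def fun_eq_iff algebra_simps dest: fun_cong[of _ _ c])
  then have "of_int (wt b - k * int r - wt c) * f (bv b) c = 0"
    by (simp add: algebra_simps)
  then have "wt b - k * int r - wt c = 0 \<or> f (bv b) c = 0"
    by (simp only: mult_eq_0_iff of_int_eq_0_iff)
  with c show ?thesis by simp
qed

lemma hom_Pmod_EFE_top:
  assumes f: "hom (Pmod r i) N f" and i: "0 \<le> i" "i \<le> int r - 2"
  shows "opE N (opF N (opE N (f (bv (Hv i))))) = (\<lambda>_. 0)"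
proof -
  have H: "inBasis r i (Hv i)" and R: "inBasis r i (Rv (i + 2))" and S: "inBasis r i (Sv i)"
    using i by (auto simp: inBasis_def)
  have "opE (Pmod r i) (bv (Hv i)) = bv (Rv (i + 2))"
    "opF (Pmod r i) (bv (Rv (i + 2))) = bv (Sv i)" "opE (Pmod r i) (bv (Sv i)) = (\<lambda>_. 0)"
    using H R S by (simp_all add: opE_Pmod_bv opF_Pmod_bv Eb_def Fb_def add.commute)
  moreover have "f (opE (Pmod r i) v) = opE N (f v)" "f (opF (Pmod r i) v) = opF N (f v)"
    if "v \<in> carrier (Pmod r i)" for v
    using f that unfolding hom_def by auto
  ultimately show ?thesis
    using bv_in_carrier_Pmod[OF H] bv_in_carrier_Pmod[OF R] bv_in_carrier_Pmod[OF S]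
      hom_apply_zero[OF f zero_in_carrier_Pmod] by metis
qed

lemma int_mult_window:
  assumes "0 < r" "- int r < k * int r - m * int r" "k * int r - m * int r < int r"
  shows "k = m"
proof -
  have "(- 1) * int r < (k - m) * int r" "(k - m) * int r < 1 * int r"
    using assms(2,3) by (simp_all add: algebra_simps)
  with assms(1) show ?thesis by (simp only: mult_less_cancel_right) simp
qed

lemma hom_top_image_cases:
  assumes r: "0 < r" and i: "0 \<le> i" "i \<le> int r - 2" and l: "0 \<le> l" "l \<le> int r - 2"
    and f: "hom (Pmod r i) (tensC r k (Pmod r l)) f" and nonzero: "f \<noteq> (\<lambda>_ _. 0)"
  shows "(k = 0 \<and> l = i \<and> (\<exists>x y. f (bv (Hv i)) = (\<lambda>c. x * bv (Hv i) c + y * bv (Sv i) c)))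
    \<or> (k = 1 \<and> l = int r - 2 - i \<and> (\<exists>a. a \<noteq> 0 \<and> f (bv (Hv i)) = smul a (bv (Lv (i - int r)))))
    \<or> (k = -1 \<and> l = int r - 2 - i \<and> (\<exists>a. a \<noteq> 0 \<and> f (bv (Hv i)) = smul a (bv (Rv (i + int r)))))"
proof -
  define w where "w = f (bv (Hv i))"
  have top: "inBasis r i (Hv i)" using i by (simp add: inBasis_def)
  have "w \<in> carrier (Pmod r l)"
    using f bv_in_carrier_Pmod[OF top] unfolding w_def hom_def tensC_simps by blast
  moreover have "\<forall>c. wt c \<noteq> i - k * int r \<longrightarrow> w c = 0"
    using hom_tensC_image_weight[OF f top] by (simp add: w_def)
  moreover have "opE (Pmod r l) (opF (Pmod r l) (opE (Pmod r l) w)) = (\<lambda>_. 0)"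
    using hom_Pmod_EFE_top[OF f i] qn_nonzero
    by (simp add: w_def tensC_simps opE_Pmod_smul smul_eq_zero_iff)
  moreover have w_nonzero: "w \<noteq> (\<lambda>_. 0)"
  proof
    assume "w = (\<lambda>_. 0)"
    then have "f = (\<lambda>_ _. 0)"
      using hom_Pmod_unique[OF f hom_zero _ i] linear_umod_tensC[OF linear_umod_Pmod]
      by (simp add: w_def)
    with nonzero show False ..
  qed
  ultimately have "(i - k * int r = l \<and>
        (\<exists>x y. w = (\<lambda>c. x * bv (Hv (i - k * int r)) c + y * bv (Sv (i - k * int r)) c)))
    \<or> (i - k * int r = 2 * int r - 2 - l \<and> (\<exists>a. w = smul a (bv (Rv (i - k * int r)))))
    \<or> (i - k * int r = - l - 2 \<and> (\<exists>a. w = smul a (bv (Lv (i - k * int r)))))"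
    by (rule EFE_kernel_weight_vector[OF l])
  then show ?thesis
  proof (elim disjE conjE)
    assume "i - k * int r = l"
      and "\<exists>x y. w = (\<lambda>c. x * bv (Hv (i - k * int r)) c + y * bv (Sv (i - k * int r)) c)"
    moreover from this(1) have "k = 0" by (intro int_mult_window[OF r]) (use i l in linarith)+
    ultimately show ?thesis by (simp add: w_def)
  next
    assume "i - k * int r = 2 * int r - 2 - l" and "\<exists>a. w = smul a (bv (Rv (i - k * int r)))"
    moreover from this(1) have "k = -1" by (intro int_mult_window[OF r]) (use i l in linarith)+
    ultimately show ?thesis using w_nonzero by (auto simp: w_def smul_bv_eq_zero_iff)
  next
    assume "i - k * int r = - l - 2" and "\<exists>a. w = smul a (bv (Lv (i - k * int r)))"
    moreover from this(1) have "k = 1" by (intro int_mult_window[OF r]) (use i l in linarith)+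
    ultimately show ?thesis using w_nonzero by (auto simp: w_def smul_bv_eq_zero_iff)
  qed
qed

theorem proposition7p1:
  fixes r :: nat and i l k :: int and f :: "vec \<Rightarrow> vec"
  assumes "0 < r"
    and "0 \<le> i" "i \<le> int r - 2"
    and "0 \<le> l" "l \<le> int r - 2"
    and "hom (Pmod r i) (tensC r k (Pmod r l)) f"
    and "f \<noteq> (\<lambda>_. (\<lambda>_. 0))"
  shows "\<exists>lam mu :: complex.
           (k = 0 \<and> l = i \<and> f = (\<lambda>v c. lam * Imor r i v c + mu * xmor r i v c))
         \<or> (k = 1 \<and> l = int r - 2 - i \<and> f = (\<lambda>v. smul lam (alpha_plus r i v)))
         \<or> (k = -1 \<and> l = int r - 2 - i \<and> f = (\<lambda>v. smul lam (alpha_minus r i v)))"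
proof -
  note i = assms(2,3) and f = assms(6)
  note lin = linear_umod_tensC[OF linear_umod_Pmod]
  from hom_top_image_cases[OF assms] show ?thesis
  proof (elim disjE conjE exE)
    fix x y assume "k = 0" "l = i" "f (bv (Hv i)) = (\<lambda>c. x * bv (Hv i) c + y * bv (Sv i) c)"
    with f have "f = (\<lambda>v c. x * Imor r i v c + y * xmor r i v c)"
      by (intro hom_Pmod_endo_eq[OF _ i]) (simp_all add: tensC_zero)
    with \<open>k = 0\<close> \<open>l = i\<close> show ?thesis by blast
  next
    fix a assume "k = 1" "l = int r - 2 - i" "a \<noteq> 0"
      and "f (bv (Hv i)) = smul a (bv (Lv (i - int r)))"
    with f have "f = (\<lambda>v. smul a (alpha_plus r i v))"
      unfolding alpha_plus_def hom_of_top_def[symmetric]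
      by (intro hom_eq_smul_hom_of_top[OF _ lin _ _ i]) simp_all
    with \<open>k = 1\<close> \<open>l = int r - 2 - i\<close> show ?thesis by blast
  next
    fix a assume "k = -1" "l = int r - 2 - i" "a \<noteq> 0"
      and "f (bv (Hv i)) = smul a (bv (Rv (i + int r)))"
    define d where "d = inverse (qfact r i ^ 2)"
    have "d \<noteq> 0" using qfact_nonzero[OF i(2)] by (simp add: d_def)
    with \<open>f (bv (Hv i)) = _\<close>
    have "f (bv (Hv i)) = smul (a / d) (smul d (bv (Rv (i + int r))))" by (simp add: smul_smul)
    with f \<open>k = -1\<close> \<open>l = _\<close> \<open>a \<noteq> 0\<close> \<open>d \<noteq> 0\<close>
    have "f = (\<lambda>v. smul (a / d) (alpha_minus r i v))"
      unfolding alpha_minus_def hom_of_top_def[symmetric] d_def[symmetric]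
      by (intro hom_eq_smul_hom_of_top[OF _ lin _ _ i]) simp_all
    with \<open>k = -1\<close> \<open>l = int r - 2 - i\<close> show ?thesis by blast
  qed
qed

end
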